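(* Let $X$ be the vertex set of a dual polar graph of diameter $d$ with distance $\partial$ and base vertex $u_0\in X$. Let $x,y\in X$, $U=x\cap y$, and $X'=\{z\in X: U\subseteq z\}$. For every $z\in X$ with $f_x(z)=f_y(z)=1$ there is a unique $z'\in X'$ such that $f_x(z')=f_y(z')=1$ and $f_{z'}(z)=1$.
   Context: Let $V$ be a finite-dimensional vector space over a finite field with a non-degenerate alternating, Hermitian, or quadratic form of Witt index $d$; $X$ is the set of maximal totally isotropic subspaces (dimension $d$), adjacent iff their intersection has dimension $d-1$, with distance $\partial(x,y)=d-\dim(x\cap y)$. For $z\in X$, $f_z:X\to\mathbb{R}$ is defined by $f_z(w)=1$ if $\partial(u_0,z)+\partial(z,w)=\partial(u_0,w)$ and $f_z(w)=0$ otherwise. *)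

theory Defs
  imports "HOL-Analysis.Analysis"
begin

text \<open>Ambient space: V = F^n, with F a finite field ('a) and n = CARD('n).
  Subspaces and dimension are those of the library interpretation vec
  (vector space over 'a with scalar multiplication (*s)).\<close>

definition bilinear_form :: "('a::field ^'n \<Rightarrow> 'a ^'n \<Rightarrow> 'a) \<Rightarrow> bool" where
  "bilinear_form B \<longleftrightarrow>
     (\<forall>x y z. B (x + y) z = B x z + B y z) \<and>
     (\<forall>x y z. B x (y + z) = B x y + B x z) \<and>
     (\<forall>c x y. B (c *s x) y = c * B x y) \<and>
     (\<forall>c x y. B x (c *s y) = c * B x y)"

definition nondegenerate_form :: "('a::field ^'n \<Rightarrow> 'a ^'n \<Rightarrow> 'a) \<Rightarrow> bool" where
  "nondegenerate_form B \<longleftrightarrow> (\<forall>x. (\<forall>y. B x y = 0) \<longrightarrow> x = 0)"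

definition alternating_form :: "('a::field ^'n \<Rightarrow> 'a ^'n \<Rightarrow> 'a) \<Rightarrow> bool" where
  "alternating_form B \<longleftrightarrow> bilinear_form B \<and> (\<forall>x. B x x = 0) \<and> nondegenerate_form B"

definition field_involution :: "('a::field \<Rightarrow> 'a) \<Rightarrow> bool" where
  "field_involution \<sigma> \<longleftrightarrow>
     (\<forall>a b. \<sigma> (a + b) = \<sigma> a + \<sigma> b) \<and> (\<forall>a b. \<sigma> (a * b) = \<sigma> a * \<sigma> b) \<and>
     (\<forall>a. \<sigma> (\<sigma> a) = a) \<and> (\<exists>a. \<sigma> a \<noteq> a)"

definition hermitian_form :: "('a::field \<Rightarrow> 'a) \<Rightarrow> ('a ^'n \<Rightarrow> 'a ^'n \<Rightarrow> 'a) \<Rightarrow> bool" where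
  "hermitian_form \<sigma> B \<longleftrightarrow> field_involution \<sigma> \<and>
     (\<forall>x y z. B (x + y) z = B x z + B y z) \<and>
     (\<forall>c x y. B (c *s x) y = c * B x y) \<and>
     (\<forall>x y. B y x = \<sigma> (B x y)) \<and>
     nondegenerate_form B"

definition polar_form :: "('a::field ^'n \<Rightarrow> 'a) \<Rightarrow> 'a ^'n \<Rightarrow> 'a ^'n \<Rightarrow> 'a" where
  "polar_form Q x y = Q (x + y) - Q x - Q y"

definition quadratic_form :: "('a::field ^'n \<Rightarrow> 'a) \<Rightarrow> bool" where
  "quadratic_form Q \<longleftrightarrow>
     (\<forall>c x. Q (c *s x) = c ^ 2 * Q x) \<and> bilinear_form (polar_form Q) \<and>
     (\<forall>x. Q x = 0 \<and> (\<forall>y. polar_form Q x y = 0) \<longrightarrow> x = 0)"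

definition totally_isotropic :: "('a::field ^'n \<Rightarrow> 'a ^'n \<Rightarrow> 'a) \<Rightarrow> ('a ^'n) set \<Rightarrow> bool" where
  "totally_isotropic B W \<longleftrightarrow> vec.subspace W \<and> (\<forall>x\<in>W. \<forall>y\<in>W. B x y = 0)"

definition totally_singular :: "('a::field ^'n \<Rightarrow> 'a) \<Rightarrow> ('a ^'n) set \<Rightarrow> bool" where
  "totally_singular Q W \<longleftrightarrow> vec.subspace W \<and> (\<forall>x\<in>W. Q x = 0)"

text \<open>A polar-space structure on V: the predicate "totally isotropic subspace" coming from
  a non-degenerate alternating, Hermitian, or quadratic form.\<close>
definition polar_iso :: "(('a::{field,finite} ^'n) set \<Rightarrow> bool) \<Rightarrow> bool" where
  "polar_iso tiso \<longleftrightarrow>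
     (\<exists>B. alternating_form B \<and> tiso = totally_isotropic B) \<or>
     (\<exists>\<sigma> B. hermitian_form \<sigma> B \<and> tiso = totally_isotropic B) \<or>
     (\<exists>Q. quadratic_form Q \<and> tiso = totally_singular Q)"

definition witt_index :: "(('a::field ^'n) set \<Rightarrow> bool) \<Rightarrow> nat" where
  "witt_index tiso = Max (vec.dim ` {W. tiso W})"

definition dp_vertices :: "(('a::field ^'n) set \<Rightarrow> bool) \<Rightarrow> ('a ^'n) set set" where
  "dp_vertices tiso = {W. tiso W \<and> (\<forall>W'. tiso W' \<and> W \<subseteq> W' \<longrightarrow> W' = W)}"

definition dp_dist :: "(('a::field ^'n) set \<Rightarrow> bool) \<Rightarrow> ('a ^'n) set \<Rightarrow> ('a ^'n) set \<Rightarrow> nat" where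
  "dp_dist tiso x y = witt_index tiso - vec.dim (x \<inter> y)"

text \<open>f_z(w) = 1 iff z lies on a geodesic from u0 to w.\<close>
definition f_vec :: "(('a::field ^'n) set \<Rightarrow> bool) \<Rightarrow> ('a ^'n) set \<Rightarrow> ('a ^'n) set \<Rightarrow> ('a ^'n) set \<Rightarrow> real" where
  "f_vec tiso u0 z w = (if dp_dist tiso u0 z + dp_dist tiso z w = dp_dist tiso u0 w then 1 else 0)"

end

theory Submission
  imports Defs
begin

text \<open>
  On a geodesic u -- w -- v, i.e. when dim (u \<inter> w) + dim (w \<inter> v) = d + dim (u \<inter> v),
  the subspace (u \<inter> w) + (w \<inter> v) of w has dimension at least d \<ge> dim w, which forces
  u \<inter> v \<subseteq> w = (u \<inter> w) + (w \<inter> v).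
  Total isotropy is a pairwise condition, so a sum of three subspaces any two of which
  lie in a common totally isotropic subspace is again totally isotropic.

  Existence: extend (u0 \<inter> x \<inter> y) + (x \<inter> z) + (y \<inter> z) to a maximal totally isotropic
  subspace z'. It contains x \<inter> y, and comparing with the totally isotropic subspace
  (u0 \<inter> x) + (u0 \<inter> y) + (x \<inter> y \<inter> z), whose dimension is at most d, puts z' on the
  three required geodesics.

  Uniqueness: two such vertices meet u0 in the same subspace P \<subseteq> x \<inter> y, so both lie in
  the totally isotropic subspace P + (z1 \<inter> z) + (z2 \<inter> z) and coincide by maximality.
\<close>

section \<open>Sums of subspaces\<close>

lemma sums_eq_set_plus: "{x + y | x y. x \<in> S \<and> y \<in> T} = S + T"
  by (auto simp: set_plus_def)

lemma vec_subspace_set_plus: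
  "vec.subspace S \<Longrightarrow> vec.subspace T \<Longrightarrow> vec.subspace (S + T)"
  using vec.subspace_sums by (simp add: sums_eq_set_plus)

lemma vec_dim_set_plus_Int:
  "vec.subspace S \<Longrightarrow> vec.subspace T \<Longrightarrow> vec.dim (S + T) + vec.dim (S \<inter> T) = vec.dim S + vec.dim T"
  using vec.dim_sums_Int by (simp add: sums_eq_set_plus)

lemma set_plus_subset_subspace:
  "vec.subspace W \<Longrightarrow> S \<subseteq> W \<Longrightarrow> T \<subseteq> W \<Longrightarrow> S + T \<subseteq> W"
  by (auto elim!: set_plus_elim intro: vec.subspace_add)

lemma subset_set_plus_left: "vec.subspace T \<Longrightarrow> S \<subseteq> S + T"
  by (metis add.commute set_zero_plus2 vec.subspace_0)

lemma subset_set_plus_right: "vec.subspace S \<Longrightarrow> T \<subseteq> S + T"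
  by (metis set_zero_plus2 vec.subspace_0)

lemma inter_subset_set_plus:
  assumes "vec.subspace u" "vec.subspace y" "vec.subspace z"
    and x: "x = (u \<inter> x) + (x \<inter> z)" and y: "y = (u \<inter> y) + (y \<inter> z)"
    and "u \<inter> z \<subseteq> y"
  shows "x \<inter> y \<subseteq> (u \<inter> x \<inter> y) + (x \<inter> z)"
proof
  fix v assume v: "v \<in> x \<inter> y"
  have "v \<in> (u \<inter> x) + (x \<inter> z)" "v \<in> (u \<inter> y) + (y \<inter> z)"
    using v by (subst x[symmetric] y[symmetric], blast)+
  then obtain p q p' q' where pq: "v = p + q" "p \<in> u \<inter> x" "q \<in> x \<inter> z"
    and pq': "v = p' + q'" "p' \<in> u \<inter> y" "q' \<in> y \<inter> z"
    by (metis set_plus_elim)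
  have "p - p' = q' - q"
    using pq(1) pq'(1) by (simp add: algebra_simps)
  moreover have "p - p' \<in> u" "q' - q \<in> z"
    using pq pq' assms(1,3) by (auto intro: vec.subspace_diff)
  ultimately have "p - p' \<in> y"
    using assms(6) by auto
  then have "p \<in> y"
    using vec.subspace_add[OF assms(2), of p' "p - p'"] pq'(2) by simp
  then show "v \<in> (u \<inter> x \<inter> y) + (x \<inter> z)"
    using pq by auto
qed

section \<open>Totally isotropic subspaces\<close>

lemma biadditive_sum3_isotropic:
  fixes B :: "'a::field ^'n \<Rightarrow> 'a ^'n \<Rightarrow> 'a"
  assumes add_left: "\<And>x y z. B (x + y) z = B x z + B y z"
    and add_right: "\<And>x y z. B x (y + z) = B x y + B x z"
    and "vec.subspace A1" "vec.subspace A2" "vec.subspace A3"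
    and vanish: "\<And>a b. a \<in> A1 \<union> A2 \<union> A3 \<Longrightarrow> b \<in> A1 \<union> A2 \<union> A3 \<Longrightarrow> B a b = 0"
  shows "totally_isotropic B (A1 + A2 + A3)"
  unfolding totally_isotropic_def
proof (intro conjI ballI)
  show "vec.subspace (A1 + A2 + A3)"
    using assms by (intro vec_subspace_set_plus)
next
  fix u v assume "u \<in> A1 + A2 + A3" "v \<in> A1 + A2 + A3"
  then obtain a1 a2 a3 b1 b2 b3 where "u = a1 + a2 + a3" "v = b1 + b2 + b3"
    "a1 \<in> A1" "a2 \<in> A2" "a3 \<in> A3" "b1 \<in> A1" "b2 \<in> A2" "b3 \<in> A3"
    by (metis set_plus_elim)
  then show "B u v = 0"
    by (simp add: add_left add_right vanish)
qed

lemma quadratic_sum3_singular: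
  fixes Q :: "'a::field ^'n \<Rightarrow> 'a"
  assumes bilinear: "bilinear_form (polar_form Q)"
    and "vec.subspace A1" "vec.subspace A2" "vec.subspace A3"
    and singular: "\<And>a. a \<in> A1 \<union> A2 \<union> A3 \<Longrightarrow> Q a = 0"
    and orthogonal: "\<And>a b. a \<in> A1 \<union> A2 \<union> A3 \<Longrightarrow> b \<in> A1 \<union> A2 \<union> A3 \<Longrightarrow> polar_form Q a b = 0"
  shows "totally_singular Q (A1 + A2 + A3)"
  unfolding totally_singular_def
proof (intro conjI ballI)
  show "vec.subspace (A1 + A2 + A3)"
    using assms by (intro vec_subspace_set_plus)
next
  have add_left: "polar_form Q (x + y) z = polar_form Q x z + polar_form Q y z" for x y z
    using bilinear unfolding bilinear_form_def by blast
  have expand: "Q (x + y) = Q x + Q y + polar_form Q x y" for x y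
    unfolding polar_form_def by simp
  fix u assume "u \<in> A1 + A2 + A3"
  then obtain a1 a2 a3 where "u = a1 + a2 + a3" "a1 \<in> A1" "a2 \<in> A2" "a3 \<in> A3"
    by (metis set_plus_elim)
  then show "Q u = 0"
    by (simp add: expand add_left singular orthogonal)
qed

lemma hermitian_form_add_right:
  assumes "hermitian_form \<sigma> B"
  shows "B x (y + z) = B x y + B x z"
proof -
  have "B (y + z) x = B y x + B z x" and conj_sym: "\<And>x y. B y x = \<sigma> (B x y)"
    and "\<And>a b. \<sigma> (a + b) = \<sigma> a + \<sigma> b"
    using assms unfolding hermitian_form_def field_involution_def by blast+
  then show ?thesis
    by (metis conj_sym)
qed

lemma totally_singular_polar_form_eq_0:
  assumes "totally_singular Q T" "a \<in> T" "b \<in> T"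
  shows "polar_form Q a b = 0"
  using assms vec.subspace_add unfolding totally_singular_def polar_form_def by fastforce

lemma polar_iso_subspace: "polar_iso tiso \<Longrightarrow> tiso W \<Longrightarrow> vec.subspace W"
  unfolding polar_iso_def totally_isotropic_def totally_singular_def by auto

lemma polar_iso_sum3:
  assumes "polar_iso tiso"
    and "vec.subspace A1" "vec.subspace A2" "vec.subspace A3"
    and "tiso T12" "A1 \<union> A2 \<subseteq> T12"
    and "tiso T13" "A1 \<union> A3 \<subseteq> T13"
    and "tiso T23" "A2 \<union> A3 \<subseteq> T23"
  shows "tiso (A1 + A2 + A3)"
proof -
  have common: "\<exists>T. tiso T \<and> a \<in> T \<and> b \<in> T"
    if "a \<in> A1 \<union> A2 \<union> A3" "b \<in> A1 \<union> A2 \<union> A3" for a b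
    using that by (elim UnE) (use assms(5-) in blast)+
  have isotropic_vanish: "B a b = 0"
    if "tiso = totally_isotropic B" "a \<in> A1 \<union> A2 \<union> A3" "b \<in> A1 \<union> A2 \<union> A3" for B a b
    using common[OF that(2,3)] unfolding that(1) totally_isotropic_def by blast
  from assms(1) consider
      B where "alternating_form B" "tiso = totally_isotropic B"
    | \<sigma> B where "hermitian_form \<sigma> B" "tiso = totally_isotropic B"
    | Q where "quadratic_form Q" "tiso = totally_singular Q"
    unfolding polar_iso_def by blast
  then show ?thesis
  proof cases
    case (1 B)
    have "B (x + y) z = B x z + B y z" "B x (y + z) = B x y + B x z" for x y z
      using 1(1) unfolding alternating_form_def bilinear_form_def by blast+
    then show ?thesis
      using assms(2-4) isotropic_vanish[OF 1(2)] unfolding 1(2)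
      by (intro biadditive_sum3_isotropic)
  next
    case (2 \<sigma> B)
    have "B (x + y) z = B x z + B y z" "B x (y + z) = B x y + B x z" for x y z
      using 2(1) hermitian_form_add_right unfolding hermitian_form_def by blast+
    then show ?thesis
      using assms(2-4) isotropic_vanish[OF 2(2)] unfolding 2(2)
      by (intro biadditive_sum3_isotropic)
  next
    case (3 Q)
    have "Q a = 0 \<and> polar_form Q a b = 0"
      if "a \<in> A1 \<union> A2 \<union> A3" "b \<in> A1 \<union> A2 \<union> A3" for a b
      using common[OF that] totally_singular_polar_form_eq_0
      unfolding 3(2) totally_singular_def by blast
    moreover have "bilinear_form (polar_form Q)"
      using 3(1) unfolding quadratic_form_def by blast
    ultimately show ?thesis
      unfolding 3(2) using assms(2-4) by (intro quadratic_sum3_singular) blast+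
  qed
qed

section \<open>Geodesics in the dual polar graph\<close>

lemma dim_le_witt_index:
  fixes tiso :: "('a::{field,finite} ^'n) set \<Rightarrow> bool"
  shows "tiso W \<Longrightarrow> vec.dim W \<le> witt_index tiso"
  unfolding witt_index_def by (rule Max_ge) (auto intro: finite)

lemma geodesic_dim_le:
  fixes tiso :: "('a::{field,finite} ^'n) set \<Rightarrow> bool"
  assumes "polar_iso tiso" "tiso w" "vec.subspace u" "vec.subspace v"
  shows "vec.dim (u \<inter> w) + vec.dim (w \<inter> v) \<le> witt_index tiso + vec.dim (u \<inter> v)"
proof -
  have "vec.subspace w"
    using assms polar_iso_subspace by blast
  then have "vec.dim ((u \<inter> w) + (w \<inter> v)) \<le> vec.dim w"
    by (intro vec.dim_subset set_plus_subset_subspace) auto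
  moreover have "vec.dim ((u \<inter> w) \<inter> (w \<inter> v)) \<le> vec.dim (u \<inter> v)"
    by (rule vec.dim_subset) auto
  moreover have "vec.dim ((u \<inter> w) + (w \<inter> v)) + vec.dim ((u \<inter> w) \<inter> (w \<inter> v))
      = vec.dim (u \<inter> w) + vec.dim (w \<inter> v)"
    using \<open>vec.subspace w\<close> assms by (intro vec_dim_set_plus_Int vec.subspace_inter)
  ultimately show ?thesis
    using dim_le_witt_index[of tiso w] assms(2) by linarith
qed

lemma f_vec_eq_1_iff:
  fixes tiso :: "('a::{field,finite} ^'n) set \<Rightarrow> bool"
  assumes "polar_iso tiso" "tiso u" "tiso w" "tiso v"
  shows "f_vec tiso u w v = 1 \<longleftrightarrow>
    witt_index tiso + vec.dim (u \<inter> v) \<le> vec.dim (u \<inter> w) + vec.dim (w \<inter> v)"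
proof -
  have inter_le: "vec.dim (A \<inter> A') \<le> witt_index tiso" if "tiso A" for A A'
    using dim_le_witt_index[of tiso A, OF that] vec.dim_subset[OF Int_lower1, of A A'] by linarith
  have "vec.dim (u \<inter> w) \<le> witt_index tiso" "vec.dim (w \<inter> v) \<le> witt_index tiso"
    "vec.dim (u \<inter> v) \<le> witt_index tiso"
    using inter_le assms(2-4) by blast+
  moreover have "vec.dim (u \<inter> w) + vec.dim (w \<inter> v) \<le> witt_index tiso + vec.dim (u \<inter> v)"
    using assms by (intro geodesic_dim_le) (auto intro: polar_iso_subspace)
  ultimately show ?thesis
    unfolding f_vec_def dp_dist_def by auto
qed

lemma f_vec_eq_1_D:
  fixes tiso :: "('a::{field,finite} ^'n) set \<Rightarrow> bool"
  assumes "polar_iso tiso" "tiso u" "tiso w" "tiso v" "f_vec tiso u w v = 1"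
  shows "u \<inter> v \<subseteq> w" "w = (u \<inter> w) + (w \<inter> v)"
proof -
  have sub: "vec.subspace u" "vec.subspace w" "vec.subspace v"
    using assms polar_iso_subspace by blast+
  then have sub_parts: "vec.subspace (u \<inter> w)" "vec.subspace (w \<inter> v)"
    by (auto intro: vec.subspace_inter)
  have sum_le: "(u \<inter> w) + (w \<inter> v) \<subseteq> w"
    using sub by (intro set_plus_subset_subspace) auto
  have "vec.dim ((u \<inter> w) + (w \<inter> v)) \<le> vec.dim w"
    using sum_le by (rule vec.dim_subset)
  moreover have "vec.dim ((u \<inter> w) \<inter> (w \<inter> v)) \<le> vec.dim (u \<inter> v)"
    by (rule vec.dim_subset) auto
  moreover note vec_dim_set_plus_Int[OF sub_parts] dim_le_witt_index[of tiso w, OF assms(3)]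
  moreover have "witt_index tiso + vec.dim (u \<inter> v) \<le> vec.dim (u \<inter> w) + vec.dim (w \<inter> v)"
    using assms f_vec_eq_1_iff by blast
  ultimately have dims: "vec.dim (u \<inter> v) \<le> vec.dim ((u \<inter> w) \<inter> (w \<inter> v))"
    "vec.dim w \<le> vec.dim ((u \<inter> w) + (w \<inter> v))"
    by linarith+
  have "(u \<inter> w) \<inter> (w \<inter> v) = u \<inter> v"
    using sub sub_parts dims(1) by (intro vec.subspace_dim_equal) (auto intro: vec.subspace_inter)
  then show "u \<inter> v \<subseteq> w"
    by blast
  show "w = (u \<inter> w) + (w \<inter> v)"
    using sub sub_parts sum_le dims(2)
    by (intro vec.subspace_dim_equal[symmetric] vec_subspace_set_plus)
qed

lemma dp_vertices_tiso: "w \<in> dp_vertices tiso \<Longrightarrow> tiso w"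
  unfolding dp_vertices_def by blast

lemma dp_vertices_eqI:
  assumes "w \<in> dp_vertices tiso" "w' \<in> dp_vertices tiso" "tiso T" "w \<subseteq> T" "w' \<subseteq> T"
  shows "w = w'"
  using assms unfolding dp_vertices_def by blast

lemma exists_vertex_superset:
  fixes tiso :: "('a::{field,finite} ^'n) set \<Rightarrow> bool"
  assumes "tiso W"
  obtains w where "w \<in> dp_vertices tiso" "W \<subseteq> w"
proof -
  have "W \<in> {V. tiso V \<and> W \<subseteq> V}"
    using assms by simp
  from finite_has_maximal2[OF finite this]
  obtain m where m: "tiso m" "W \<subseteq> m"
    and maximal: "\<And>V. tiso V \<Longrightarrow> W \<subseteq> V \<Longrightarrow> m \<subseteq> V \<Longrightarrow> m = V"
    by auto
  have "m \<in> dp_vertices tiso"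
    unfolding dp_vertices_def using m maximal by (auto dest: subset_trans[OF m(2)])
  then show ?thesis
    using m(2) by (rule that)
qed

lemma geodesic_vertex_eqI:
  fixes tiso :: "('a::{field,finite} ^'n) set \<Rightarrow> bool"
  assumes "polar_iso tiso" "tiso u" "tiso v"
    and w: "w \<in> dp_vertices tiso" "f_vec tiso u w v = 1"
    and w': "w' \<in> dp_vertices tiso" "f_vec tiso u w' v = 1"
    and same_meet: "u \<inter> w = u \<inter> w'"
  shows "w = w'"
proof (rule dp_vertices_eqI[OF w(1) w'(1)])
  have tiso: "tiso w" "tiso w'"
    using w w' dp_vertices_tiso by blast+
  have sub: "vec.subspace u" "vec.subspace v" "vec.subspace w" "vec.subspace w'"
    using assms tiso polar_iso_subspace by blast+
  show "tiso ((u \<inter> w) + (w \<inter> v) + (w' \<inter> v))"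
    using sub same_meet
    by (intro polar_iso_sum3[OF assms(1) _ _ _ tiso(1) _ tiso(2) _ assms(3)])
      (auto intro: vec.subspace_inter)
  have "w \<subseteq> (u \<inter> w) + (w \<inter> v)"
    using f_vec_eq_1_D(2)[OF assms(1,2) tiso(1) assms(3) w(2)] by (rule equalityD1)
  also have "\<dots> \<subseteq> (u \<inter> w) + (w \<inter> v) + (w' \<inter> v)"
    using sub by (intro subset_set_plus_left vec.subspace_inter)
  finally show "w \<subseteq> (u \<inter> w) + (w \<inter> v) + (w' \<inter> v)" .
  have "w' \<subseteq> (u \<inter> w) + (w' \<inter> v)"
    using f_vec_eq_1_D(2)[OF assms(1,2) tiso(2) assms(3) w'(2)] unfolding same_meet
    by (rule equalityD1)
  also have "\<dots> \<subseteq> (u \<inter> w) + (w \<inter> v) + (w' \<inter> v)"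
    using sub by (intro set_plus_mono2 subset_set_plus_left vec.subspace_inter order_refl)
  finally show "w' \<subseteq> (u \<inter> w) + (w \<inter> v) + (w' \<inter> v)" .
qed

lemma geodesic_parts_dim_ge:
  fixes tiso :: "('a::{field,finite} ^'n) set \<Rightarrow> bool"
  assumes "polar_iso tiso" "tiso u" "tiso x" "tiso y" "tiso z"
    and "f_vec tiso u x z = 1" "f_vec tiso u y z = 1"
  shows "witt_index tiso + vec.dim (u \<inter> z)
    \<le> vec.dim (u \<inter> x \<inter> y) + vec.dim ((x \<inter> z) + (y \<inter> z))"
proof -
  have sub: "vec.subspace u" "vec.subspace x" "vec.subspace y" "vec.subspace z"
    using assms polar_iso_subspace by blast+
  have sub_parts: "vec.subspace (u \<inter> x)" "vec.subspace (u \<inter> y)" "vec.subspace (x \<inter> z)"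
    "vec.subspace (y \<inter> z)" "vec.subspace (x \<inter> y \<inter> z)"
    using sub by (auto intro: vec.subspace_inter)
  have "tiso ((u \<inter> x) + (u \<inter> y) + (x \<inter> y \<inter> z))"
    using sub_parts
    by (intro polar_iso_sum3[OF assms(1) _ _ _ assms(2) _ assms(3) _ assms(4)]) auto
  then have "vec.dim ((u \<inter> x) + (u \<inter> y) + (x \<inter> y \<inter> z)) \<le> witt_index tiso"
    by (rule dim_le_witt_index)
  moreover have "vec.dim ((u \<inter> x) + (u \<inter> y) + (x \<inter> y \<inter> z))
      + vec.dim (((u \<inter> x) + (u \<inter> y)) \<inter> (x \<inter> y \<inter> z))
    = vec.dim ((u \<inter> x) + (u \<inter> y)) + vec.dim (x \<inter> y \<inter> z)"
    using sub_parts by (intro vec_dim_set_plus_Int vec_subspace_set_plus)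
  moreover have "((u \<inter> x) + (u \<inter> y)) \<inter> (x \<inter> y \<inter> z) \<subseteq> u \<inter> z"
    using set_plus_subset_subspace[OF sub(1), of "u \<inter> x" "u \<inter> y"] by blast
  then have "vec.dim (((u \<inter> x) + (u \<inter> y)) \<inter> (x \<inter> y \<inter> z)) \<le> vec.dim (u \<inter> z)"
    by (rule vec.dim_subset)
  moreover have "(u \<inter> x) \<inter> (u \<inter> y) = u \<inter> x \<inter> y" "(x \<inter> z) \<inter> (y \<inter> z) = x \<inter> y \<inter> z"
    by blast+
  then have "vec.dim ((u \<inter> x) + (u \<inter> y)) + vec.dim (u \<inter> x \<inter> y) = vec.dim (u \<inter> x) + vec.dim (u \<inter> y)"
    "vec.dim ((x \<inter> z) + (y \<inter> z)) + vec.dim (x \<inter> y \<inter> z) = vec.dim (x \<inter> z) + vec.dim (y \<inter> z)"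
    using vec_dim_set_plus_Int sub_parts by metis+
  moreover have "witt_index tiso + vec.dim (u \<inter> z) \<le> vec.dim (u \<inter> x) + vec.dim (x \<inter> z)"
    "witt_index tiso + vec.dim (u \<inter> z) \<le> vec.dim (u \<inter> y) + vec.dim (y \<inter> z)"
    using assms f_vec_eq_1_iff by blast+
  ultimately show ?thesis
    by linarith
qed

lemma f_vec_eq_1_if_set_plus_subset:
  fixes tiso :: "('a::{field,finite} ^'n) set \<Rightarrow> bool"
  assumes "polar_iso tiso" "tiso u" "tiso x" "tiso z" "tiso z'" "f_vec tiso u x z = 1"
    and P: "vec.subspace P" "P \<subseteq> u \<inter> x" "P + (x \<inter> z) \<subseteq> z'"
    and "vec.dim (u \<inter> z') \<le> vec.dim P"
  shows "f_vec tiso u x z' = 1"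
proof -
  have sub: "vec.subspace x" "vec.subspace z" "vec.subspace (x \<inter> z)"
    using assms polar_iso_subspace by (blast intro: vec.subspace_inter)+
  have "P + (x \<inter> z) \<subseteq> x"
    using P sub by (intro set_plus_subset_subspace) auto
  then have "vec.dim (P + (x \<inter> z)) \<le> vec.dim (x \<inter> z')"
    using P(3) by (intro vec.dim_subset) blast
  moreover have "vec.dim (P + (x \<inter> z)) + vec.dim (P \<inter> (x \<inter> z)) = vec.dim P + vec.dim (x \<inter> z)"
    using P(1) sub(3) by (rule vec_dim_set_plus_Int)
  moreover have "vec.dim (P \<inter> (x \<inter> z)) \<le> vec.dim (u \<inter> z)"
    using P(2) by (intro vec.dim_subset) blast
  moreover have "witt_index tiso + vec.dim (u \<inter> z) \<le> vec.dim (u \<inter> x) + vec.dim (x \<inter> z)"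
    using assms f_vec_eq_1_iff by blast
  ultimately have "witt_index tiso + vec.dim (u \<inter> z') \<le> vec.dim (u \<inter> x) + vec.dim (x \<inter> z')"
    using assms(10) by linarith
  then show ?thesis
    using f_vec_eq_1_iff[OF assms(1-3,5)] by blast
qed

lemma f_vec_eq_1_if_geodesic_parts_subset:
  fixes tiso :: "('a::{field,finite} ^'n) set \<Rightarrow> bool"
  assumes p: "polar_iso tiso" and tiso: "tiso u" "tiso x" "tiso y" "tiso z" "tiso z'"
    and fx: "f_vec tiso u x z = 1" and fy: "f_vec tiso u y z = 1"
    and parts: "u \<inter> x \<inter> y \<subseteq> z'" "x \<inter> z \<subseteq> z'" "y \<inter> z \<subseteq> z'"
  shows "f_vec tiso u z' z = 1" "vec.dim (u \<inter> z') \<le> vec.dim (u \<inter> x \<inter> y)"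
proof -
  have sub: "vec.subspace u" "vec.subspace z" "vec.subspace z'"
    using p tiso polar_iso_subspace by blast+
  have "(x \<inter> z) + (y \<inter> z) \<subseteq> z' \<inter> z"
    using sub parts by (intro set_plus_subset_subspace vec.subspace_inter) auto
  then have "vec.dim ((x \<inter> z) + (y \<inter> z)) \<le> vec.dim (z' \<inter> z)"
    by (rule vec.dim_subset)
  moreover have "vec.dim (u \<inter> x \<inter> y) \<le> vec.dim (u \<inter> z')"
    using parts(1) by (intro vec.dim_subset) blast
  moreover have "witt_index tiso + vec.dim (u \<inter> z)
      \<le> vec.dim (u \<inter> x \<inter> y) + vec.dim ((x \<inter> z) + (y \<inter> z))"
    using p tiso(1-4) fx fy by (rule geodesic_parts_dim_ge)
  moreover have "vec.dim (u \<inter> z') + vec.dim (z' \<inter> z) \<le> witt_index tiso + vec.dim (u \<inter> z)"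
    using p tiso(5) sub by (intro geodesic_dim_le)
  ultimately show "f_vec tiso u z' z = 1" "vec.dim (u \<inter> z') \<le> vec.dim (u \<inter> x \<inter> y)"
    using f_vec_eq_1_iff[OF p tiso(1,5,4)] by linarith+
qed

lemma geodesic_vertex_through_meet_exists:
  fixes tiso :: "('a::{field,finite} ^'n) set \<Rightarrow> bool"
  assumes p: "polar_iso tiso" and tiso: "tiso u" "tiso x" "tiso y" "tiso z"
    and fx: "f_vec tiso u x z = 1" and fy: "f_vec tiso u y z = 1"
  obtains z' where "z' \<in> dp_vertices tiso" "x \<inter> y \<subseteq> z'"
    "f_vec tiso u x z' = 1" "f_vec tiso u y z' = 1" "f_vec tiso u z' z = 1"
proof -
  have sub: "vec.subspace u" "vec.subspace x" "vec.subspace y" "vec.subspace z"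
    using p tiso polar_iso_subspace by blast+
  define P where "P = u \<inter> x \<inter> y"
  have sub_parts: "vec.subspace P" "vec.subspace (x \<inter> z)" "vec.subspace (y \<inter> z)"
    unfolding P_def using sub by (auto intro: vec.subspace_inter)
  have "tiso (P + (x \<inter> z) + (y \<inter> z))"
    using sub_parts unfolding P_def
    by (intro polar_iso_sum3[OF p _ _ _ tiso(2) _ tiso(3) _ tiso(4)]) auto
  then obtain z' where z': "z' \<in> dp_vertices tiso" "P + (x \<inter> z) + (y \<inter> z) \<subseteq> z'"
    using exists_vertex_superset by blast
  then have tiso': "tiso z'"
    by (blast intro: dp_vertices_tiso)
  have "P + (x \<inter> z) \<subseteq> P + (x \<inter> z) + (y \<inter> z)"
    using sub_parts(3) by (rule subset_set_plus_left)
  moreover have "P + (y \<inter> z) \<subseteq> P + (x \<inter> z) + (y \<inter> z)"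
    using sub_parts(2) by (intro set_plus_mono2 subset_set_plus_left order_refl)
  ultimately have Px: "P + (x \<inter> z) \<subseteq> z'" and Py: "P + (y \<inter> z) \<subseteq> z'"
    using z'(2) by blast+
  then have parts: "P \<subseteq> z'" "x \<inter> z \<subseteq> z'" "y \<inter> z \<subseteq> z'"
    using subset_set_plus_left[OF sub_parts(2), of P] subset_set_plus_right[OF sub_parts(1)]
    by blast+
  have "x \<inter> y \<subseteq> P + (x \<inter> z)"
    unfolding P_def
    by (rule inter_subset_set_plus[OF sub(1,3,4) f_vec_eq_1_D(2)[OF p tiso(1,2,4) fx]
          f_vec_eq_1_D(2)[OF p tiso(1,3,4) fy] f_vec_eq_1_D(1)[OF p tiso(1,3,4) fy]])
  with Px have meet: "x \<inter> y \<subseteq> z'"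
    by blast
  note fz = f_vec_eq_1_if_geodesic_parts_subset[OF p tiso tiso' fx fy parts[unfolded P_def]]
  have "f_vec tiso u x z' = 1"
    by (rule f_vec_eq_1_if_set_plus_subset[OF p tiso(1,2,4) tiso' fx sub_parts(1) _ Px
          fz(2)[folded P_def]]) (auto simp: P_def)
  moreover have "f_vec tiso u y z' = 1"
    by (rule f_vec_eq_1_if_set_plus_subset[OF p tiso(1,3,4) tiso' fy sub_parts(1) _ Py
          fz(2)[folded P_def]]) (auto simp: P_def)
  ultimately show ?thesis
    using z'(1) meet fz(1) by (intro that)
qed

lemma geodesic_vertex_through_meet_unique:
  fixes tiso :: "('a::{field,finite} ^'n) set \<Rightarrow> bool"
  assumes p: "polar_iso tiso" and tiso: "tiso u" "tiso x" "tiso y" "tiso z"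
    and w: "w \<in> dp_vertices tiso" "x \<inter> y \<subseteq> w"
      "f_vec tiso u x w = 1" "f_vec tiso u y w = 1" "f_vec tiso u w z = 1"
    and w': "w' \<in> dp_vertices tiso" "x \<inter> y \<subseteq> w'"
      "f_vec tiso u x w' = 1" "f_vec tiso u y w' = 1" "f_vec tiso u w' z = 1"
  shows "w = w'"
proof (rule geodesic_vertex_eqI[OF p tiso(1,4) w(1,5) w'(1,5)])
  have tiso': "tiso w" "tiso w'"
    using w(1) w'(1) dp_vertices_tiso by blast+
  have "u \<inter> w \<subseteq> x \<inter> y" "u \<inter> w' \<subseteq> x \<inter> y"
    using f_vec_eq_1_D(1)[OF p tiso(1,2) tiso'(1) w(3)] f_vec_eq_1_D(1)[OF p tiso(1,3) tiso'(1) w(4)]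
      f_vec_eq_1_D(1)[OF p tiso(1,2) tiso'(2) w'(3)] f_vec_eq_1_D(1)[OF p tiso(1,3) tiso'(2) w'(4)]
    by blast+
  then show "u \<inter> w = u \<inter> w'"
    using w(2) w'(2) by blast
qed

theorem lemmaA4:
  fixes tiso :: "('a::{field,finite} ^'n) set \<Rightarrow> bool"
    and u0 x y z :: "('a ^'n) set"
  assumes "polar_iso tiso"
    and "u0 \<in> dp_vertices tiso" and "x \<in> dp_vertices tiso" and "y \<in> dp_vertices tiso"
    and "z \<in> dp_vertices tiso"
    and "f_vec tiso u0 x z = 1" and "f_vec tiso u0 y z = 1"
  shows "\<exists>!z'. z' \<in> {w \<in> dp_vertices tiso. x \<inter> y \<subseteq> w} \<and>
           f_vec tiso u0 x z' = 1 \<and> f_vec tiso u0 y z' = 1 \<and> f_vec tiso u0 z' z = 1"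
proof -
  have tiso: "tiso u0" "tiso x" "tiso y" "tiso z"
    using assms(2-5) dp_vertices_tiso by blast+
  obtain z' where "z' \<in> dp_vertices tiso" "x \<inter> y \<subseteq> z'"
    "f_vec tiso u0 x z' = 1" "f_vec tiso u0 y z' = 1" "f_vec tiso u0 z' z = 1"
    using geodesic_vertex_through_meet_exists[OF assms(1) tiso assms(6,7)] .
  then show ?thesis
    using geodesic_vertex_through_meet_unique[OF assms(1) tiso] by blast
qed

end
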